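(* Let $T,L$ be positive integers and $\epsilon\in(0,1)$. For $\rho=\{\rho_t^l\}\in[0,1]^{T\times L}$ let $F(\rho)=\sum_{t,l}\rho_t^l r_t^l b_t^l(\rho_t^l)$, $G(\rho)=1-\prod_{t=1}^T\prod_{l=1}^L\rho_t^l$, $H(\rho)=\sum_{t,l}(1-\rho_t^l)$. Let $\rho^\ast$ be an optimal solution of PA1: $\min F(\rho)$ s.t. $G(\rho)\le\epsilon$, $\rho\in[0,1]^{T\times L}$. Let $\tilde\lambda,\tilde\rho$ be optimal solutions of $\max_{\lambda\ge0}\min_{\rho\in[0,1]^{T\times L}}\{F(\rho)+\lambda[H(\rho)-\epsilon]\}$. Then $$0\le F(\tilde\rho)-F(\rho^\ast)\le\tilde\lambda\min\Big\{(TL-1)\epsilon,\ \frac{TL(TL-1)}{2}\epsilon^2\Big\}.$$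
   Context: For each $t\in\{1,\dots,T\}$, $l\in\{1,\dots,L\}$: $r_t^l$ is a positive integer and $b_t^l:[0,1]\to[0,b^l_{\max}]$ is strictly increasing and convex. $\rho_t^l$ is the probability of the event of successfully recruiting $r_t^l$ participants at time $t$, location $l$, and these events are independent. PA2 denotes $\min F(\rho)$ s.t. $H(\rho)\le\epsilon$, $\rho\in[0,1]^{T\times L}$; $F(\tilde\rho)$ is its optimal value. *)

theory Defs
  imports "HOL-Analysis.Analysis"
begin

text \<open>Decision variables rho t l for t in {1..T}, l in {1..L}; values outside
  the index range are irrelevant.\<close>

definition box :: "nat \<Rightarrow> nat \<Rightarrow> (nat \<Rightarrow> nat \<Rightarrow> real) set" where
  "box T L = {\<rho>. \<forall>t\<in>{1..T}. \<forall>l\<in>{1..L}. 0 \<le> \<rho> t l \<and> \<rho> t l \<le> 1}"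

definition objF :: "(nat \<Rightarrow> nat \<Rightarrow> nat) \<Rightarrow> (nat \<Rightarrow> nat \<Rightarrow> real \<Rightarrow> real) \<Rightarrow> nat \<Rightarrow> nat
    \<Rightarrow> (nat \<Rightarrow> nat \<Rightarrow> real) \<Rightarrow> real" where
  "objF r b T L \<rho> = (\<Sum>t=1..T. \<Sum>l=1..L. \<rho> t l * real (r t l) * b t l (\<rho> t l))"

definition consG :: "nat \<Rightarrow> nat \<Rightarrow> (nat \<Rightarrow> nat \<Rightarrow> real) \<Rightarrow> real" where
  "consG T L \<rho> = 1 - (\<Prod>t=1..T. \<Prod>l=1..L. \<rho> t l)"

definition consH :: "nat \<Rightarrow> nat \<Rightarrow> (nat \<Rightarrow> nat \<Rightarrow> real) \<Rightarrow> real" where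
  "consH T L \<rho> = (\<Sum>t=1..T. \<Sum>l=1..L. 1 - \<rho> t l)"

definition PA1_optimal where
  "PA1_optimal r b T L eps \<rho>s \<longleftrightarrow>
     \<rho>s \<in> box T L \<and> consG T L \<rho>s \<le> eps \<and>
     (\<forall>\<rho>\<in>box T L. consG T L \<rho> \<le> eps \<longrightarrow> objF r b T L \<rho>s \<le> objF r b T L \<rho>)"

definition lagr where
  "lagr r b T L eps \<rho> lam = objF r b T L \<rho> + lam * (consH T L \<rho> - eps)"

definition dual_fun where
  "dual_fun r b T L eps lam = (INF \<rho>\<in>box T L. lagr r b T L eps \<rho> lam)"

definition dual_optimal where
  "dual_optimal r b T L eps lamt \<rho>t \<longleftrightarrow>
     0 \<le> lamt \<and> \<rho>t \<in> box T L \<and>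
     (\<forall>\<rho>\<in>box T L. lagr r b T L eps \<rho>t lamt \<le> lagr r b T L eps \<rho> lamt) \<and>
     (\<forall>lam\<ge>0. dual_fun r b T L eps lam \<le> dual_fun r b T L eps lamt)"

end

theory Submission
  imports Defs
begin

text \<open>Each summand of the Lagrangian is strictly convex in its own coordinate, so the inner
  minimizer \<open>\<rho>t\<close> is unique and tilting the multiplier by \<open>\<mu>\<close> changes the dual function by
  \<open>\<mu> (H \<rho>t - eps) + o(\<mu>)\<close>; this needs only convexity, not continuity, of the coordinate
  functions. Maximality of \<open>lamt\<close> over \<open>lam \<ge> 0\<close> then yields complementary slackness,
  \<open>H \<rho>t \<le> eps\<close> and \<open>lamt (H \<rho>t - eps) = 0\<close>. By the Weierstrass product inequality
  \<open>G \<le> H\<close>, so \<open>\<rho>t\<close> is feasible for PA1 and \<open>F \<rho>s \<le> F \<rho>t\<close>; comparing Lagrangian values at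
  \<open>\<rho>t\<close> and \<open>\<rho>s\<close> gives \<open>F \<rho>t - F \<rho>s \<le> lamt (H \<rho>s - eps)\<close>. Finally \<open>G \<rho>s \<le> eps\<close> forces every
  coordinate of \<open>\<rho>s\<close> into \<open>[1 - eps, 1]\<close>, and the second-order Weierstrass bound
  \<open>\<Prod> y \<le> 1 - \<Sum> (1 - y) + n (n - 1) / 2 eps\<^sup>2\<close> bounds \<open>H \<rho>s - eps\<close>.\<close>

lemma one_minus_sum_le_prod:
  fixes y :: "'i \<Rightarrow> real"
  assumes "finite A" and "\<And>i. i \<in> A \<Longrightarrow> 0 \<le> y i \<and> y i \<le> 1"
  shows "1 - (\<Sum>i\<in>A. 1 - y i) \<le> (\<Prod>i\<in>A. y i)"
  using assms
proof (induction A rule: finite_induct)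
  case (insert j A)
  let ?S = "\<Sum>i\<in>A. 1 - y i" and ?P = "\<Prod>i\<in>A. y i"
  have IH: "1 - ?S \<le> ?P" and yj: "0 \<le> y j" "y j \<le> 1" and S0: "0 \<le> ?S"
    using insert by (auto intro: sum_nonneg)
  have "1 - ((1 - y j) + ?S) \<le> y j * (1 - ?S)"
    using S0 yj by (simp add: algebra_simps mult_left_le_one_le)
  also have "\<dots> \<le> y j * ?P"
    using IH yj by (intro mult_left_mono)
  finally show ?case
    using insert.hyps by simp
qed simp

lemma prod_le_one_minus_sum_plus_square:
  fixes y :: "'i \<Rightarrow> real"
  assumes "finite A" and "\<And>i. i \<in> A \<Longrightarrow> 1 - e \<le> y i \<and> y i \<le> 1" and "e \<le> 1"
  shows "(\<Prod>i\<in>A. y i) \<le> 1 - (\<Sum>i\<in>A. 1 - y i) + real (card A) * (real (card A) - 1) / 2 * e\<^sup>2"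
  using assms
proof (induction A rule: finite_induct)
  case (insert j A)
  let ?S = "\<Sum>i\<in>A. 1 - y i" and ?P = "\<Prod>i\<in>A. y i" and ?k = "real (card A)"
  define x where "x = 1 - y j"
  have IH: "?P \<le> 1 - ?S + ?k * (?k - 1) / 2 * e\<^sup>2"
    using insert by simp
  have unit: "0 \<le> y i \<and> y i \<le> 1" if "i \<in> A" for i
    using insert.prems that by force
  have x: "0 \<le> x" "x \<le> e"
    using insert.prems(1)[of j] by (auto simp: x_def)
  have S: "0 \<le> ?S" "?S \<le> ?k * e"
    using unit insert.prems(1) sum_bounded_above[of A "\<lambda>i. 1 - y i" e] by (force intro: sum_nonneg)+
  have weierstrass: "1 - ?S \<le> ?P"
    using one_minus_sum_le_prod[of A y] insert.hyps(1) unit by blast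
  have "?P * y j = ?P - x * ?P"
    by (simp add: x_def algebra_simps)
  also have "\<dots> \<le> 1 - ?S + ?k * (?k - 1) / 2 * e\<^sup>2 - x * (1 - ?S)"
    using IH mult_left_mono[OF weierstrass x(1)] by linarith
  also have "\<dots> \<le> 1 - (?S + x) + ?k * (?k - 1) / 2 * e\<^sup>2 + e * (?k * e)"
    using mult_mono[OF x(2) S(2) _ S(1)] x by (simp add: algebra_simps)
  also have "\<dots> = 1 - (?S + x) + (?k + 1) * ?k / 2 * e\<^sup>2"
    by (simp add: field_simps power2_eq_square)
  finally show ?case
    using insert.hyps by (simp add: x_def algebra_simps)
qed simp

lemma sum_one_minus_excess_bound:
  fixes y :: "'i \<Rightarrow> real"
  assumes "finite A" and unit: "\<And>i. i \<in> A \<Longrightarrow> 0 \<le> y i \<and> y i \<le> 1"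
    and prod: "1 - (\<Prod>i\<in>A. y i) \<le> e" and "e \<le> 1"
  shows "(\<Sum>i\<in>A. 1 - y i) - e
           \<le> min ((real (card A) - 1) * e) (real (card A) * (real (card A) - 1) / 2 * e\<^sup>2)"
proof -
  have factor: "1 - e \<le> y i \<and> y i \<le> 1" if "i \<in> A" for i
  proof -
    have "(\<Prod>i\<in>A. y i) = y i * (\<Prod>i\<in>A - {i}. y i)"
      using assms(1) that by (simp add: prod.remove)
    also have "\<dots> \<le> y i"
      using unit that by (auto intro!: mult_left_le prod_le_1)
    finally show ?thesis
      using prod unit[OF that] by linarith
  qed
  have "(\<Sum>i\<in>A. 1 - y i) \<le> real (card A) * e"
    using sum_bounded_above[of A "\<lambda>i. 1 - y i" e] factor by force
  moreover have "(\<Prod>i\<in>A. y i) \<le> 1 - (\<Sum>i\<in>A. 1 - y i) + real (card A) * (real (card A) - 1) / 2 * e\<^sup>2"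
    using prod_le_one_minus_sum_plus_square[OF assms(1) factor \<open>e \<le> 1\<close>] .
  ultimately show ?thesis
    using prod by (simp add: field_simps)
qed

lemma sum_fun_upd_le_iff:
  fixes f :: "'i \<Rightarrow> 'a \<Rightarrow> real"
  assumes "finite S" and "i \<in> S"
  shows "(\<Sum>j\<in>S. f j (x j)) \<le> (\<Sum>j\<in>S. f j ((x(i := y)) j)) \<longleftrightarrow> f i (x i) \<le> f i y"
proof -
  have "(\<Sum>j\<in>S - {i}. f j ((x(i := y)) j)) = (\<Sum>j\<in>S - {i}. f j (x j))"
    by (rule sum.cong) auto
  then show ?thesis
    using sum.remove[OF assms, of "\<lambda>j. f j (x j)"] sum.remove[OF assms, of "\<lambda>j. f j ((x(i := y)) j)"]
    by simp
qed

lemma mult_self_midpoint_strict: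
  fixes b :: "real \<Rightarrow> real"
  assumes conv: "convex_on A b" and mono: "strict_mono_on A b" and nonneg: "A \<subseteq> {0..}"
    and x: "x \<in> A" and y: "y \<in> A" and "x \<noteq> y"
  shows "(x + y) / 2 * b ((x + y) / 2) < (x * b x + y * b y) / 2"
proof -
  let ?m = "(x + y) / 2"
  have "b ?m \<le> (b x + b y) / 2"
    using convex_onD[OF conv, of "1/2" x y] x y by (simp add: field_simps)
  moreover have "0 \<le> ?m"
    using nonneg x y by (auto simp: subset_eq)
  ultimately have "?m * b ?m \<le> ?m * ((b x + b y) / 2)"
    by (rule mult_left_mono)
  also have "\<dots> = (x * b x + y * b y) / 2 - (x - y) * (b x - b y) / 4"
    by (simp add: field_simps)
  also have "\<dots> < (x * b x + y * b y) / 2"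
  proof -
    have "0 < (x - y) * (b x - b y)"
      using \<open>x \<noteq> y\<close> strict_mono_onD[OF mono] x y
      by (cases "x < y") (auto intro: mult_pos_pos mult_neg_neg)
    then show ?thesis by linarith
  qed
  finally show ?thesis .
qed

lemma convex_on_rise_beyond:
  fixes h :: "real \<Rightarrow> real"
  assumes conv: "convex_on A h" and a: "a \<in> A" and x: "x \<in> A"
    and "0 < \<eta>" and far: "\<eta> \<le> \<bar>x - a\<bar>"
    and rise: "\<And>z. z \<in> A \<Longrightarrow> \<bar>z - a\<bar> = \<eta> \<Longrightarrow> c \<le> h z - h a"
  shows "c * \<bar>x - a\<bar> \<le> \<eta> * (h x - h a)"
proof -
  define s where "s = \<eta> / \<bar>x - a\<bar>"
  have s: "0 \<le> s" "s \<le> 1" "s * \<bar>x - a\<bar> = \<eta>"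
    using far \<open>0 < \<eta>\<close> by (auto simp: s_def)
  have z: "(1 - s) * a + s * x \<in> A"
    using convexD_alt[OF convex_on_imp_convex[OF conv] a x s(1,2)] by (simp add: algebra_simps)
  have "(1 - s) * a + s * x - a = s * (x - a)"
    by (simp add: algebra_simps)
  then have "\<bar>(1 - s) * a + s * x - a\<bar> = \<eta>"
    using s by (simp add: abs_mult)
  then have "c \<le> h ((1 - s) * a + s * x) - h a"
    by (rule rise[OF z])
  also have "\<dots> \<le> s * (h x - h a)"
    using convex_onD[OF conv s(1,2) a x] by (simp add: algebra_simps)
  finally have "c * \<bar>x - a\<bar> \<le> s * (h x - h a) * \<bar>x - a\<bar>"
    by (rule mult_right_mono) simp
  also have "\<dots> = (s * \<bar>x - a\<bar>) * (h x - h a)"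
    by (simp add: ac_simps)
  finally show ?thesis
    using s(3) by simp
qed

lemma convex_on_strict_min_tilt:
  fixes h :: "real \<Rightarrow> real"
  assumes conv: "convex_on A h" and a: "a \<in> A"
    and strict_min: "\<And>x. x \<in> A \<Longrightarrow> x \<noteq> a \<Longrightarrow> h a < h x" and "0 < \<eta>"
  shows "\<forall>\<^sub>F \<mu> in nhds 0. \<forall>x\<in>A. h a - \<mu> * a - \<bar>\<mu>\<bar> * \<eta> \<le> h x - \<mu> * x"
proof -
  \<comment> \<open>\<open>c\<close> is the least rise of \<open>h\<close> at distance \<open>\<eta>\<close> from \<open>a\<close>; by convexity the rise is at least
    linear in \<open>\<bar>x - a\<bar>\<close> further out, which absorbs every small tilt \<open>\<mu>\<close>.\<close>
  define Z where "Z = {z \<in> A. \<bar>z - a\<bar> = \<eta>}"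
  define c where "c = Min (insert 1 ((\<lambda>z. h z - h a) ` Z))"
  have "finite Z"
    by (rule finite_subset[of _ "{a - \<eta>, a + \<eta>}"]) (auto simp: Z_def abs_if)
  have "0 < c"
    unfolding c_def using \<open>finite Z\<close> strict_min \<open>0 < \<eta>\<close> by (subst Min_gr_iff) (auto simp: Z_def)
  have rise: "c \<le> h z - h a" if "z \<in> A" and "\<bar>z - a\<bar> = \<eta>" for z
    using that \<open>finite Z\<close> by (auto simp: c_def Z_def)
  show ?thesis
    unfolding eventually_nhds_metric_le
  proof (intro exI[of _ "c / \<eta>"] conjI allI impI ballI)
    show "0 < c / \<eta>"
      using \<open>0 < c\<close> \<open>0 < \<eta>\<close> by simp
    fix \<mu> x :: real assume "dist \<mu> 0 \<le> c / \<eta>" and x: "x \<in> A"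
    then have \<mu>: "\<bar>\<mu>\<bar> \<le> c / \<eta>"
      by simp
    have "\<mu> * (x - a) \<le> \<bar>\<mu>\<bar> * \<bar>x - a\<bar>"
      by (metis abs_ge_self abs_mult)
    moreover have "\<bar>\<mu>\<bar> * \<bar>x - a\<bar> \<le> \<bar>\<mu>\<bar> * \<eta> + (h x - h a)"
    proof (cases "\<bar>x - a\<bar> < \<eta>")
      case True
      then have "\<bar>\<mu>\<bar> * \<bar>x - a\<bar> \<le> \<bar>\<mu>\<bar> * \<eta>"
        by (intro mult_left_mono) auto
      moreover have "h a \<le> h x"
        using strict_min[OF x] by (cases "x = a") auto
      ultimately show ?thesis
        by linarith
    next
      case False
      have "\<bar>\<mu>\<bar> * \<bar>x - a\<bar> \<le> c / \<eta> * \<bar>x - a\<bar>"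
        using \<mu> by (rule mult_right_mono) simp
      also have "\<dots> \<le> h x - h a"
      proof -
        have "c * \<bar>x - a\<bar> \<le> \<eta> * (h x - h a)"
          using False by (intro convex_on_rise_beyond[OF conv a x \<open>0 < \<eta>\<close> _ rise]) simp_all
        then show ?thesis
          using \<open>0 < \<eta>\<close> by (simp add: field_simps)
      qed
      finally show ?thesis
        using \<open>0 < \<eta>\<close> by (simp add: add_increasing)
    qed
    ultimately show "h a - \<mu> * a - \<bar>\<mu>\<bar> * \<eta> \<le> h x - \<mu> * x"
      by (simp add: algebra_simps)
  qed
qed

lemma nonneg_maximizer_first_order:
  fixes q :: "real \<Rightarrow> real"
  assumes "0 \<le> lam" and max: "\<And>\<mu>. 0 \<le> lam + \<mu> \<Longrightarrow> q (lam + \<mu>) \<le> q lam"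
    and supergrad: "\<And>\<eta>. 0 < \<eta> \<Longrightarrow> \<forall>\<^sub>F \<mu> in nhds 0. q lam + \<mu> * g - \<bar>\<mu>\<bar> * \<eta> \<le> q (lam + \<mu>)"
  shows "g \<le> 0 \<and> lam * g = 0"
proof -
  have step: "\<exists>d>0. \<forall>\<mu>. \<bar>\<mu>\<bar> \<le> d \<longrightarrow> 0 \<le> lam + \<mu> \<longrightarrow> \<mu> * g \<le> \<bar>\<mu>\<bar> * \<eta>" if \<eta>: "0 < \<eta>" for \<eta>
  proof -
    obtain d where "0 < d" and d: "\<And>\<mu>. \<bar>\<mu>\<bar> \<le> d \<Longrightarrow> q lam + \<mu> * g - \<bar>\<mu>\<bar> * \<eta> \<le> q (lam + \<mu>)"
      using supergrad[OF \<eta>] unfolding eventually_nhds_metric_le dist_real_def by auto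
    have "\<mu> * g \<le> \<bar>\<mu>\<bar> * \<eta>" if "\<bar>\<mu>\<bar> \<le> d" and "0 \<le> lam + \<mu>" for \<mu>
      using d[OF that(1)] max[OF that(2)] by linarith
    then show ?thesis
      using \<open>0 < d\<close> by blast
  qed
  have "g \<le> 0"
  proof (rule ccontr)
    assume "\<not> g \<le> 0"
    then obtain d where "0 < d" and d: "\<And>\<mu>. \<bar>\<mu>\<bar> \<le> d \<Longrightarrow> 0 \<le> lam + \<mu> \<Longrightarrow> \<mu> * g \<le> \<bar>\<mu>\<bar> * (g / 2)"
      using step[of "g / 2"] by auto
    have "d * g \<le> \<bar>d\<bar> * (g / 2)"
      using d[of d] \<open>0 < d\<close> \<open>0 \<le> lam\<close> by simp
    then show False
      using \<open>0 < d\<close> \<open>\<not> g \<le> 0\<close> by simp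
  qed
  moreover have "lam * g = 0"
  proof (rule ccontr)
    assume "lam * g \<noteq> 0"
    then have "0 < lam" "g < 0"
      using \<open>0 \<le> lam\<close> \<open>g \<le> 0\<close> by auto
    then obtain d where "0 < d" and d: "\<And>\<mu>. \<bar>\<mu>\<bar> \<le> d \<Longrightarrow> 0 \<le> lam + \<mu> \<Longrightarrow> \<mu> * g \<le> \<bar>\<mu>\<bar> * (- g / 2)"
      using step[of "- g / 2"] by auto
    define m where "m = min d lam"
    have "0 < m" "m \<le> d" "m \<le> lam"
      using \<open>0 < d\<close> \<open>0 < lam\<close> by (auto simp: m_def)
    then have "- m * g \<le> m * (- g / 2)"
      using d[of "- m"] by simp
    then show False
      using \<open>0 < m\<close> \<open>g < 0\<close> by (simp add: field_simps)
  qed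
  ultimately show ?thesis ..
qed

definition lagr_term :: "(nat \<Rightarrow> nat \<Rightarrow> nat) \<Rightarrow> (nat \<Rightarrow> nat \<Rightarrow> real \<Rightarrow> real) \<Rightarrow> real
    \<Rightarrow> nat \<Rightarrow> nat \<Rightarrow> real \<Rightarrow> real" where
  "lagr_term r b lam t l y = y * real (r t l) * b t l y + lam * (1 - y)"

lemma lagr_term_shift: "lagr_term r b (lam + \<mu>) t l y = lagr_term r b lam t l y + \<mu> * (1 - y)"
  by (simp add: lagr_term_def algebra_simps)

lemma lagr_shift: "lagr r b T L eps \<rho> (lam + \<mu>) = lagr r b T L eps \<rho> lam + \<mu> * (consH T L \<rho> - eps)"
  by (simp add: lagr_def algebra_simps)

lemma consH_eq_sum: "consH T L \<rho> = (\<Sum>(t, l)\<in>{1..T} \<times> {1..L}. 1 - \<rho> t l)"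
  by (simp add: consH_def sum.cartesian_product)

lemma consG_eq_prod: "consG T L \<rho> = 1 - (\<Prod>(t, l)\<in>{1..T} \<times> {1..L}. \<rho> t l)"
  by (simp add: consG_def prod.cartesian_product)

lemma objF_eq_sum:
  "objF r b T L \<rho> = (\<Sum>(t, l)\<in>{1..T} \<times> {1..L}. \<rho> t l * real (r t l) * b t l (\<rho> t l))"
  by (simp add: objF_def sum.cartesian_product)

lemma lagr_eq_sum:
  "lagr r b T L eps \<rho> lam = (\<Sum>(t, l)\<in>{1..T} \<times> {1..L}. lagr_term r b lam t l (\<rho> t l)) - lam * eps"
  unfolding lagr_def objF_eq_sum consH_eq_sum lagr_term_def
  by (simp add: split_def sum.distrib sum_subtractf sum_distrib_left algebra_simps)

lemma box_iff: "\<rho> \<in> box T L \<longleftrightarrow> (\<forall>i\<in>{1..T} \<times> {1..L}. 0 \<le> case_prod \<rho> i \<and> case_prod \<rho> i \<le> 1)"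
  by (auto simp: box_def)

lemma consG_le_consH:
  assumes "\<rho> \<in> box T L"
  shows "consG T L \<rho> \<le> consH T L \<rho>"
proof -
  have "1 - (\<Sum>i\<in>{1..T} \<times> {1..L}. 1 - case_prod \<rho> i) \<le> (\<Prod>i\<in>{1..T} \<times> {1..L}. case_prod \<rho> i)"
    using assms unfolding box_iff by (intro one_minus_sum_le_prod) auto
  then show ?thesis
    unfolding consG_eq_prod consH_eq_sum by (simp add: split_def)
qed

lemma consH_excess_le:
  assumes "\<rho> \<in> box T L" and "consG T L \<rho> \<le> eps" and "eps \<le> 1"
  shows "consH T L \<rho> - eps
           \<le> min ((real (T * L) - 1) * eps) (real (T * L) * (real (T * L) - 1) / 2 * eps\<^sup>2)"
proof -
  have "(\<Sum>i\<in>{1..T} \<times> {1..L}. 1 - case_prod \<rho> i) - eps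
          \<le> min ((real (card ({1..T} \<times> {1..L})) - 1) * eps)
              (real (card ({1..T} \<times> {1..L})) * (real (card ({1..T} \<times> {1..L})) - 1) / 2 * eps\<^sup>2)"
    using assms unfolding box_iff consG_eq_prod
    by (intro sum_one_minus_excess_bound) (auto simp: split_def)
  then show ?thesis
    unfolding consH_eq_sum by (simp add: split_def card_cartesian_product)
qed

lemma lagr_min_imp_lagr_term_min:
  assumes min: "\<And>\<rho>'. \<rho>' \<in> box T L \<Longrightarrow> lagr r b T L eps \<rho> lam \<le> lagr r b T L eps \<rho>' lam"
    and "\<rho> \<in> box T L" and tl: "(t, l) \<in> {1..T} \<times> {1..L}" and y: "y \<in> {0..1}"
  shows "lagr_term r b lam t l (\<rho> t l) \<le> lagr_term r b lam t l y"
proof -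
  let ?f = "\<lambda>(t, l). lagr_term r b lam t l" and ?x = "case_prod \<rho>"
  have "curry (?x((t, l) := y)) \<in> box T L"
    using \<open>\<rho> \<in> box T L\<close> y unfolding box_iff by auto
  then have "(\<Sum>i\<in>{1..T} \<times> {1..L}. ?f i (?x i)) \<le> (\<Sum>i\<in>{1..T} \<times> {1..L}. ?f i ((?x((t, l) := y)) i))"
    using min unfolding lagr_eq_sum by (fastforce simp: split_def)
  then show ?thesis
    using sum_fun_upd_le_iff[OF _ tl, of ?f ?x y] by simp
qed

lemma convex_on_lagr_term:
  assumes "convex_on {0..1} (b t l)" and "mono_on {0..1} (b t l)"
    and "\<And>y. y \<in> {0..1} \<Longrightarrow> 0 \<le> b t l y"
  shows "convex_on {0..1} (lagr_term r b lam t l)"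
proof -
  have "convex_on {0..1} (\<lambda>y. y * b t l y)"
    using assms by (intro convex_on_mul) (auto simp: convex_on_ident mono_on_def)
  then have "convex_on {0..1} (\<lambda>y. real (r t l) * (y * b t l y))"
    by (intro convex_on_cmul) simp_all
  moreover have "convex_on {0..1::real} (\<lambda>y. lam * (1 - y))"
    by (rule convex_onI) (simp_all add: algebra_simps)
  ultimately show ?thesis
    unfolding lagr_term_def by (auto simp: ac_simps)
qed

lemma lagr_term_min_unique:
  assumes "0 < r t l" and "convex_on {0..1} (b t l)" and "strict_mono_on {0..1} (b t l)"
    and a: "a \<in> {0..1}" and min: "\<And>y. y \<in> {0..1} \<Longrightarrow> lagr_term r b lam t l a \<le> lagr_term r b lam t l y"
    and x: "x \<in> {0..1}" and "x \<noteq> a"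
  shows "lagr_term r b lam t l a < lagr_term r b lam t l x"
proof -
  let ?m = "(a + x) / 2"
  have "?m * b t l ?m < (a * b t l a + x * b t l x) / 2"
    using assms by (intro mult_self_midpoint_strict) auto
  then have "real (r t l) * (?m * b t l ?m) < real (r t l) * ((a * b t l a + x * b t l x) / 2)"
    using \<open>0 < r t l\<close> by (intro mult_strict_left_mono) simp_all
  then have "lagr_term r b lam t l ?m < (lagr_term r b lam t l a + lagr_term r b lam t l x) / 2"
    unfolding lagr_term_def by (simp add: field_simps)
  moreover have "lagr_term r b lam t l a \<le> lagr_term r b lam t l ?m"
    using a x by (intro min) auto
  ultimately show ?thesis
    by argo
qed

lemma lagr_term_tilt:
  assumes "0 < r t l" and "strict_mono_on {0..1} (b t l)" and "convex_on {0..1} (b t l)"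
    and "\<And>y. y \<in> {0..1} \<Longrightarrow> 0 \<le> b t l y"
    and a: "a \<in> {0..1}" and min: "\<And>y. y \<in> {0..1} \<Longrightarrow> lagr_term r b lam t l a \<le> lagr_term r b lam t l y"
    and "0 < \<eta>"
  shows "\<forall>\<^sub>F \<mu> in nhds 0. \<forall>y\<in>{0..1}.
           lagr_term r b lam t l a - \<mu> * a - \<bar>\<mu>\<bar> * \<eta> \<le> lagr_term r b lam t l y - \<mu> * y"
proof (rule convex_on_strict_min_tilt[OF _ a _ \<open>0 < \<eta>\<close>])
  show "convex_on {0..1} (lagr_term r b lam t l)"
    using assms(2-4) by (intro convex_on_lagr_term strict_mono_on_imp_mono_on)
  show "lagr_term r b lam t l a < lagr_term r b lam t l y" if "y \<in> {0..1}" and "y \<noteq> a" for y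
    using lagr_term_min_unique[OF assms(1,3,2) a min] that by blast
qed

lemma dual_fun_eq_lagr:
  assumes "\<rho> \<in> box T L" and min: "\<And>\<rho>'. \<rho>' \<in> box T L \<Longrightarrow> lagr r b T L eps \<rho> lam \<le> lagr r b T L eps \<rho>' lam"
  shows "dual_fun r b T L eps lam = lagr r b T L eps \<rho> lam"
  unfolding dual_fun_def
proof (rule antisym)
  show "(INF \<rho>'\<in>box T L. lagr r b T L eps \<rho>' lam) \<le> lagr r b T L eps \<rho> lam"
    by (rule cINF_lower[OF bdd_belowI2 \<open>\<rho> \<in> box T L\<close>]) (rule min)
  show "lagr r b T L eps \<rho> lam \<le> (INF \<rho>'\<in>box T L. lagr r b T L eps \<rho>' lam)"
    using \<open>\<rho> \<in> box T L\<close> by (intro cINF_greatest min) auto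
qed

lemma dual_fun_supergradient:
  assumes r_pos: "\<And>t l. t \<in> {1..T} \<Longrightarrow> l \<in> {1..L} \<Longrightarrow> 0 < r t l"
    and b_mono: "\<And>t l. t \<in> {1..T} \<Longrightarrow> l \<in> {1..L} \<Longrightarrow> strict_mono_on {0..1} (b t l)"
    and b_convex: "\<And>t l. t \<in> {1..T} \<Longrightarrow> l \<in> {1..L} \<Longrightarrow> convex_on {0..1} (b t l)"
    and b_nonneg: "\<And>t l y. t \<in> {1..T} \<Longrightarrow> l \<in> {1..L} \<Longrightarrow> y \<in> {0..1} \<Longrightarrow> 0 \<le> b t l y"
    and box: "\<rho> \<in> box T L"
    and min: "\<And>\<rho>'. \<rho>' \<in> box T L \<Longrightarrow> lagr r b T L eps \<rho> lam \<le> lagr r b T L eps \<rho>' lam"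
    and "0 < \<eta>"
  shows "\<forall>\<^sub>F \<mu> in nhds 0.
           dual_fun r b T L eps lam + \<mu> * (consH T L \<rho> - eps) - \<bar>\<mu>\<bar> * \<eta> \<le> dual_fun r b T L eps (lam + \<mu>)"
proof -
  let ?S = "{1..T} \<times> {1..L}"
  \<comment> \<open>\<open>Suc\<close> keeps \<open>\<eta>'\<close> positive even for an empty index set.\<close>
  define \<eta>' where "\<eta>' = \<eta> / real (Suc (card ?S))"
  have "0 < \<eta> / real (Suc n)" and "real n * (\<eta> / real (Suc n)) \<le> \<eta>" for n
    using \<open>0 < \<eta>\<close> by (simp_all add: field_simps)
  then have "0 < \<eta>'" and card_\<eta>': "real (card ?S) * \<eta>' \<le> \<eta>"
    unfolding \<eta>'_def by blast+
  have "\<forall>\<^sub>F \<mu> in nhds 0. \<forall>y\<in>{0..1}.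
          lagr_term r b lam t l (\<rho> t l) - \<mu> * \<rho> t l - \<bar>\<mu>\<bar> * \<eta>' \<le> lagr_term r b lam t l y - \<mu> * y"
    if tl: "(t, l) \<in> ?S" for t l
  proof -
    have t: "t \<in> {1..T}" and l: "l \<in> {1..L}" and "\<rho> t l \<in> {0..1}"
      using tl box by (auto simp: box_def)
    show ?thesis
      by (rule lagr_term_tilt) (use r_pos b_mono b_convex b_nonneg t l \<open>\<rho> t l \<in> {0..1}\<close>
          lagr_min_imp_lagr_term_min[OF min box tl] \<open>0 < \<eta>'\<close> in auto)
  qed
  then have "\<forall>\<^sub>F \<mu> in nhds 0. \<forall>(t, l)\<in>?S. \<forall>y\<in>{0..1}.
      lagr_term r b lam t l (\<rho> t l) - \<mu> * \<rho> t l - \<bar>\<mu>\<bar> * \<eta>' \<le> lagr_term r b lam t l y - \<mu> * y"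
    by (intro eventually_ball_finite) auto
  then show ?thesis
  proof (rule eventually_mono)
    fix \<mu> assume tilt: "\<forall>(t, l)\<in>?S. \<forall>y\<in>{0..1}.
      lagr_term r b lam t l (\<rho> t l) - \<mu> * \<rho> t l - \<bar>\<mu>\<bar> * \<eta>' \<le> lagr_term r b lam t l y - \<mu> * y"
    have "lagr r b T L eps \<rho> (lam + \<mu>) - \<bar>\<mu>\<bar> * \<eta> \<le> lagr r b T L eps \<rho>' (lam + \<mu>)"
      if "\<rho>' \<in> box T L" for \<rho>'
    proof -
      have "real (card ?S) * (\<bar>\<mu>\<bar> * \<eta>') \<le> \<bar>\<mu>\<bar> * \<eta>"
        using mult_left_mono[OF card_\<eta>', of "\<bar>\<mu>\<bar>"] by (simp add: ac_simps)
      moreover have "(\<Sum>(t, l)\<in>?S. lagr_term r b (lam + \<mu>) t l (\<rho> t l) - \<bar>\<mu>\<bar> * \<eta>')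
          \<le> (\<Sum>(t, l)\<in>?S. lagr_term r b (lam + \<mu>) t l (\<rho>' t l))"
        using tilt that unfolding lagr_term_shift
        by (intro sum_mono) (force simp: box_def algebra_simps)
      ultimately show ?thesis
        unfolding lagr_eq_sum by (simp add: split_def sum_subtractf)
    qed
    then have "lagr r b T L eps \<rho> (lam + \<mu>) - \<bar>\<mu>\<bar> * \<eta> \<le> dual_fun r b T L eps (lam + \<mu>)"
      unfolding dual_fun_def using box by (intro cINF_greatest) auto
    then show "dual_fun r b T L eps lam + \<mu> * (consH T L \<rho> - eps) - \<bar>\<mu>\<bar> * \<eta> \<le> dual_fun r b T L eps (lam + \<mu>)"
      using dual_fun_eq_lagr[OF box min] by (simp add: lagr_shift)
  qed
qed

lemma dual_optimal_complementary_slackness: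
  assumes r_pos: "\<And>t l. t \<in> {1..T} \<Longrightarrow> l \<in> {1..L} \<Longrightarrow> 0 < r t l"
    and b_mono: "\<And>t l. t \<in> {1..T} \<Longrightarrow> l \<in> {1..L} \<Longrightarrow> strict_mono_on {0..1} (b t l)"
    and b_convex: "\<And>t l. t \<in> {1..T} \<Longrightarrow> l \<in> {1..L} \<Longrightarrow> convex_on {0..1} (b t l)"
    and b_nonneg: "\<And>t l y. t \<in> {1..T} \<Longrightarrow> l \<in> {1..L} \<Longrightarrow> y \<in> {0..1} \<Longrightarrow> 0 \<le> b t l y"
    and opt: "dual_optimal r b T L eps lam \<rho>"
  shows "consH T L \<rho> \<le> eps \<and> lam * (consH T L \<rho> - eps) = 0"
proof -
  have "consH T L \<rho> - eps \<le> 0 \<and> lam * (consH T L \<rho> - eps) = 0"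
  proof (rule nonneg_maximizer_first_order[where q = "dual_fun r b T L eps"])
    show "0 \<le> lam"
      using opt unfolding dual_optimal_def by simp
    show "dual_fun r b T L eps (lam + \<mu>) \<le> dual_fun r b T L eps lam" if "0 \<le> lam + \<mu>" for \<mu>
      using opt that unfolding dual_optimal_def by simp
    show "\<forall>\<^sub>F \<mu> in nhds 0. dual_fun r b T L eps lam + \<mu> * (consH T L \<rho> - eps) - \<bar>\<mu>\<bar> * \<eta>
            \<le> dual_fun r b T L eps (lam + \<mu>)" if "0 < \<eta>" for \<eta>
      using opt by (intro dual_fun_supergradient[OF r_pos b_mono b_convex b_nonneg _ _ that])
        (auto simp: dual_optimal_def)
  qed
  then show ?thesis
    by simp
qed

theorem theorem3:
  fixes T L :: nat and eps :: real
    and r :: "nat \<Rightarrow> nat \<Rightarrow> nat" and b :: "nat \<Rightarrow> nat \<Rightarrow> real \<Rightarrow> real"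
    and bmax :: "nat \<Rightarrow> real"
    and \<rho>s \<rho>t :: "nat \<Rightarrow> nat \<Rightarrow> real" and lamt :: real
  assumes "T \<ge> 1" and "L \<ge> 1" and "0 < eps" and "eps < 1"
    and r_pos: "\<And>t l. t \<in> {1..T} \<Longrightarrow> l \<in> {1..L} \<Longrightarrow> r t l > 0"
    and b_mono: "\<And>t l. t \<in> {1..T} \<Longrightarrow> l \<in> {1..L} \<Longrightarrow> strict_mono_on {0..1} (b t l)"
    and b_convex: "\<And>t l. t \<in> {1..T} \<Longrightarrow> l \<in> {1..L} \<Longrightarrow> convex_on {0..1} (b t l)"
    and b_range: "\<And>t l. t \<in> {1..T} \<Longrightarrow> l \<in> {1..L} \<Longrightarrow> b t l ` {0..1} \<subseteq> {0..bmax l}"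
    and opt1: "PA1_optimal r b T L eps \<rho>s"
    and optd: "dual_optimal r b T L eps lamt \<rho>t"
  shows "0 \<le> objF r b T L \<rho>t - objF r b T L \<rho>s \<and>
         objF r b T L \<rho>t - objF r b T L \<rho>s
           \<le> lamt * min ((real (T * L) - 1) * eps)
                        (real (T * L) * (real (T * L) - 1) / 2 * eps ^ 2)"
proof -
  from optd have "0 \<le> lamt" and "\<rho>t \<in> box T L"
    and lagr_min: "\<And>\<rho>. \<rho> \<in> box T L \<Longrightarrow> lagr r b T L eps \<rho>t lamt \<le> lagr r b T L eps \<rho> lamt"
    unfolding dual_optimal_def by auto
  from opt1 have "\<rho>s \<in> box T L" and "consG T L \<rho>s \<le> eps"
    and PA1_min: "\<And>\<rho>. \<rho> \<in> box T L \<Longrightarrow> consG T L \<rho> \<le> eps \<Longrightarrow> objF r b T L \<rho>s \<le> objF r b T L \<rho>"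
    unfolding PA1_optimal_def by auto
  have b_nonneg: "0 \<le> b t l y" if "t \<in> {1..T}" "l \<in> {1..L}" "y \<in> {0..1}" for t l y
    using b_range[OF that(1,2)] that(3) by (auto simp: image_subset_iff)
  have slack: "consH T L \<rho>t \<le> eps \<and> lamt * (consH T L \<rho>t - eps) = 0"
    by (rule dual_optimal_complementary_slackness[OF r_pos b_mono b_convex b_nonneg optd])
  have "objF r b T L \<rho>s \<le> objF r b T L \<rho>t"
    using PA1_min[OF \<open>\<rho>t \<in> box T L\<close>] consG_le_consH[OF \<open>\<rho>t \<in> box T L\<close>] slack by linarith
  moreover have "objF r b T L \<rho>t - objF r b T L \<rho>s \<le> lamt * (consH T L \<rho>s - eps)"
    using lagr_min[OF \<open>\<rho>s \<in> box T L\<close>] slack unfolding lagr_def right_diff_distrib by linarith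
  moreover have "lamt * (consH T L \<rho>s - eps)
      \<le> lamt * min ((real (T * L) - 1) * eps) (real (T * L) * (real (T * L) - 1) / 2 * eps\<^sup>2)"
    using consH_excess_le[OF \<open>\<rho>s \<in> box T L\<close> \<open>consG T L \<rho>s \<le> eps\<close>] \<open>eps < 1\<close> \<open>0 \<le> lamt\<close>
    by (intro mult_left_mono) auto
  ultimately show ?thesis
    by linarith
qed

end
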